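(* Let $s,t$ be positive integers and $k,l,r$ nonnegative integers. Put $$a=-\frac{l(s+t)+s}{s+t},\qquad b=\frac{k(s+t)+s}{s+t},$$ and define $$P(x)=\left(\frac{x+1}{2}\right)^{k(s+t)+s}J_{l+r}(a,b,x)^{s+t},\qquad Q(x)=\left(\frac{x-1}{2}\right)^{l(s+t)+s}J_{k+r}(-a,-b,x)^{s+t}.$$ Then $\deg(P-Q)\le m$, where $m=(k+l+r)(s+t-1)+s-r-1$.
   Context: For a nonnegative integer $N$ and complex parameters $\alpha,\beta$, the (generalized) Jacobi polynomial is $J_N(\alpha,\beta,x)=\sum_{j=0}^{N}\binom{N+\alpha+\beta+j}{j}\binom{N+\alpha}{N-j}\left(\frac{x-1}{2}\right)^j$, where $\binom{y}{j}=y(y-1)\cdots(y-j+1)/j!$ for arbitrary $y$. Here $a+b=k-l$. The polynomials $P,Q$ have degree $(s+t)(k+l+r)+s$ and $m$ equals this degree minus $k+l+2r+1$; this is the Davenport–Zannier pair for the "odd double brush" weighted tree. *)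

theory Defs
  imports "HOL-Computational_Algebra.Polynomial" Complex_Main
begin

definition jacobi :: "nat \<Rightarrow> complex \<Rightarrow> complex \<Rightarrow> complex poly" where
  "jacobi N \<alpha> \<beta> = (\<Sum>j=0..N.
      smult (((of_nat N + \<alpha> + \<beta> + of_nat j) gchoose j) * ((of_nat N + \<alpha>) gchoose (N - j)))
            ([:-1/2, 1/2:] ^ j))"

end

theory Submission
  imports Defs
begin

text \<open>Both \<open>J = J\<^sub>l\<^sub>+\<^sub>r(a,b)\<close> and \<open>K = J\<^sub>k\<^sub>+\<^sub>r(-a,-b)\<close> satisfy Jacobi's differential equation, and
  since \<open>k + r = (l + r) + a + b\<close> the combination \<open>((a+b)x + a - b) J K + (x\<^sup>2 - 1)(J'K - JK')\<close>
  is constant. As the exponents of \<open>(x+1)/2\<close> and \<open>(x-1)/2\<close> in \<open>P\<close> and \<open>Q\<close> are \<open>(s+t) b\<close> and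
  \<open>-(s+t) a\<close>, the Wronskian \<open>P'Q - PQ'\<close> is this constant times \<open>(JK)^(s+t-1)\<close> and powers of
  \<open>(x+1)/2\<close> and \<open>(x-1)/2\<close> with exponents one less than in \<open>P\<close> and \<open>Q\<close>, so its degree is small.
  On the other hand \<open>P\<close> and \<open>Q\<close> have the same degree \<open>D\<close> and the same leading coefficient, so
  \<open>R = P - Q\<close> has degree less than \<open>D\<close>, and then the Wronskian of \<open>R\<close> and \<open>Q\<close>, which equals that
  of \<open>P\<close> and \<open>Q\<close>, has degree exactly \<open>deg R + D - 1\<close>.\<close>

definition wronskian :: "'a::idom poly \<Rightarrow> 'a poly \<Rightarrow> 'a poly" where
  "wronskian p q = pderiv p * q - p * pderiv q"

lemma wronskian_diff_left: "wronskian (p - q) q = wronskian p q"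
  by (simp add: wronskian_def pderiv_diff algebra_simps)

lemma coeff_pderiv_mult_degree_sum:
  fixes p q :: "'a::{idom,ring_char_0} poly"
  shows "coeff (pderiv p * q) (degree p + degree q - 1) = of_nat (degree p) * lead_coeff p * lead_coeff q"
proof (cases "degree p")
  case 0
  then have "pderiv p = 0"
    by (simp add: pderiv_eq_0_iff)
  with 0 show ?thesis
    by simp
next
  case (Suc d)
  then have "degree (pderiv p) + degree q = degree p + degree q - 1"
    by (simp add: degree_pderiv)
  with coeff_mult_degree_sum[of "pderiv p" q] show ?thesis
    by (simp add: Suc degree_pderiv coeff_pderiv)
qed

lemma degree_wronskian_ge:
  fixes p q :: "'a::{idom,ring_char_0} poly"
  assumes "p \<noteq> 0" and "q \<noteq> 0" and "degree p \<noteq> degree q"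
  shows "degree p + degree q \<le> Suc (degree (wronskian p q))"
proof -
  have "coeff (wronskian p q) (degree p + degree q - 1)
      = (of_nat (degree p) - of_nat (degree q)) * lead_coeff p * lead_coeff q"
    using coeff_pderiv_mult_degree_sum[of p q] coeff_pderiv_mult_degree_sum[of q p]
    unfolding wronskian_def coeff_diff
    by (simp only: add.commute[of "degree q"] mult.commute[of p]) (simp add: algebra_simps)
  also have "\<dots> \<noteq> 0"
    using assms by simp
  finally show ?thesis
    using le_degree by fastforce
qed

lemma degree_diff_le_wronskian:
  fixes p q :: "'a::{idom,ring_char_0} poly"
  assumes "degree p = degree q" and "lead_coeff p = lead_coeff q" and "p \<noteq> q"
  shows "degree (p - q) + degree q \<le> Suc (degree (wronskian p q))"
proof -
  have "q \<noteq> 0"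
    using assms by (metis leading_coeff_0_iff)
  have "degree (p - q) \<le> degree q"
    using degree_diff_le assms(1) by (metis order_refl)
  moreover have "coeff (p - q) (degree q) = 0"
    using assms by simp
  ultimately have "degree (p - q) \<noteq> degree q"
    using assms(3) by (metis leading_coeff_0_iff right_minus_eq)
  with degree_wronskian_ge[of "p - q" q] \<open>q \<noteq> 0\<close> assms(3) show ?thesis
    by (simp add: wronskian_diff_left)
qed

lemma smult_conv_const_mult: "smult c p = [:c:] * p"
  by simp

lemma wronskian_power_mult:
  fixes u v p q :: "'a::idom poly"
  shows "wronskian (u ^ Suc A * p ^ Suc n) (v ^ Suc B * q ^ Suc n) =
    u ^ A * v ^ B * p ^ n * q ^ n *
      (of_nat (Suc A) * pderiv u * v * p * q - of_nat (Suc B) * u * pderiv v * p * q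
       + of_nat (Suc n) * u * v * wronskian p q)"
  unfolding wronskian_def pderiv_mult pderiv_power_Suc smult_conv_const_mult of_nat_poly[symmetric]
  by (simp only: power_Suc) algebra

text \<open>These rules turn identities between polynomials with literal coefficients into ring identities
  in the atoms \<open>[:c:]\<close> and \<open>monom 1 1\<close>, for \<open>algebra\<close>. The two coefficient-list rules must be
  applied one after the other: rewriting is bottom-up, so together they would split \<open>[:x, y, z:]\<close>
  at its inner pair first.\<close>

lemma const_poly_hom:
  fixes x y :: "'a::comm_ring_1"
  shows "[:x + y:] = [:x:] + [:y:]" and "[:x - y:] = [:x:] - [:y:]" and "[:x * y:] = [:x:] * [:y:]"
    and "[:- x:] = - [:x:]" and "[:of_nat n:] = of_nat n" and "[:numeral m:] = numeral m"
    and "[:0:] = 0" and "[:1:] = 1"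
  by (simp_all add: of_nat_poly numeral_poly one_pCons)

lemma pCons_pair_conv_monom: "[:x, y:] = [:x:] + [:y:] * monom 1 1"
  for x y :: "'a::comm_semiring_1"
  by (simp add: monom_Suc monom_0)

lemma pCons_triple_conv_monom: "[:x, y, z:] = [:x:] + [:y:] * monom 1 1 + [:z:] * monom 1 1 ^ 2"
  for x y z :: "'a::comm_semiring_1"
  by (simp add: monom_Suc monom_0 power2_eq_square)

text \<open>Jacobi's differential equation
  \<open>(1 - x\<^sup>2) y'' + (\<beta> - \<alpha> - (\<alpha> + \<beta> + 2) x) y' + N (N + \<alpha> + \<beta> + 1) y = 0\<close>, with the sign reversed.\<close>

definition jacobi_op :: "'a::field \<Rightarrow> 'a \<Rightarrow> nat \<Rightarrow> 'a poly \<Rightarrow> 'a poly" where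
  "jacobi_op \<alpha> \<beta> N p = [:-1, 0, 1:] * pderiv (pderiv p) + [:\<alpha> - \<beta>, \<alpha> + \<beta> + 2:] * pderiv p
     - smult (of_nat N * (of_nat N + \<alpha> + \<beta> + 1)) p"

lemma jacobi_op_add: "jacobi_op \<alpha> \<beta> N (p + q) = jacobi_op \<alpha> \<beta> N p + jacobi_op \<alpha> \<beta> N q"
  unfolding jacobi_op_def pderiv_add smult_add_right by algebra

lemma jacobi_op_smult: "jacobi_op \<alpha> \<beta> N (smult c p) = smult c (jacobi_op \<alpha> \<beta> N p)"
  unfolding jacobi_op_def pderiv_smult unfolding smult_conv_const_mult by algebra

lemma jacobi_op_sum: "jacobi_op \<alpha> \<beta> N (\<Sum>x\<in>A. f x) = (\<Sum>x\<in>A. jacobi_op \<alpha> \<beta> N (f x))"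
  by (induction A rule: infinite_finite_induct) (simp_all add: jacobi_op_add jacobi_op_def[of _ _ _ 0])

lemma jacobi_op_power:
  fixes \<alpha> \<beta> :: "'a::field_char_0"
  defines "w \<equiv> [:-1/2, 1/2:]"
  shows "jacobi_op \<alpha> \<beta> N (w ^ j) =
    smult (of_nat j * (of_nat j + \<alpha> + \<beta> + 1) - of_nat N * (of_nat N + \<alpha> + \<beta> + 1)) (w ^ j)
    + smult (of_nat j * (of_nat j + \<alpha>)) (w ^ (j - 1))"
proof (cases j)
  case 0
  then show ?thesis
    by (simp add: jacobi_op_def)
next
  case (Suc i)
  define h :: "'a poly" where "h = [:1/2:]"
  have w: "w = h * (monom 1 1 - 1)" and h: "2 * h = 1" and dw: "pderiv w = h"
    by (simp_all add: w_def h_def monom_Suc one_pCons numeral_poly pderiv_pCons)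
  have d1: "pderiv (w ^ Suc i) = of_nat (Suc i) * w ^ i * h"
    unfolding pderiv_power_Suc dw smult_conv_const_mult const_poly_hom ..
  have d2: "pderiv (pderiv (w ^ Suc i)) = of_nat (Suc i) * pderiv (w ^ i) * h"
    by (simp add: d1 pderiv_mult pderiv_smult pderiv_add h_def del: power_Suc)
  have euler: "w * pderiv (w ^ i) = of_nat i * w ^ i * h"
    by (cases i) (simp_all add: pderiv_power_Suc dw smult_conv_const_mult const_poly_hom mult_ac
        del: power_Suc, simp)
  \<comment> \<open>\<open>algebra\<close> needs powers with a variable exponent as atoms\<close>
  define W D where "W = w ^ i" and "D = pderiv (w ^ i)"
  show ?thesis
    using w h euler unfolding Suc jacobi_op_def d2 unfolding d1 diff_Suc_1
    unfolding pCons_triple_conv_monom unfolding pCons_pair_conv_monom smult_conv_const_mult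
    unfolding const_poly_hom of_nat_Suc power_Suc W_def[symmetric] D_def[symmetric]
    by algebra
qed

lemma jacobi_coeff_recurrence:
  fixes \<alpha> \<beta> :: "'a::field_char_0" and N j :: nat
  defines "c \<equiv> \<lambda>j. ((of_nat N + \<alpha> + \<beta> + of_nat j) gchoose j) * ((of_nat N + \<alpha>) gchoose (N - j))"
  assumes "j < N"
  shows "c (Suc j) * (of_nat (Suc j) * (of_nat (Suc j) + \<alpha>))
       = (of_nat N - of_nat j) * (of_nat N + of_nat j + \<alpha> + \<beta> + 1) * c j"
proof -
  obtain p where p: "N = Suc j + p"
    using assms less_iff_Suc_add by blast
  define y where "y = of_nat N + \<alpha> + \<beta> + of_nat j"
  define x where "x = of_nat N + \<alpha>"
  have y: "of_nat (Suc j) * ((y + 1) gchoose Suc j) = (y + 1) * (y gchoose j)"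
    by (rule Suc_times_gbinomial)
  have x: "(x - of_nat p) * (x gchoose p) = of_nat (Suc p) * (x gchoose Suc p)"
    using gbinomial_absorption[of p x] gbinomial_absorb_comp[of x p] by simp
  have "c (Suc j) * (of_nat (Suc j) * (of_nat (Suc j) + \<alpha>))
      = (of_nat (Suc j) * ((y + 1) gchoose Suc j)) * ((x - of_nat p) * (x gchoose p))"
    by (simp add: c_def x_def y_def p algebra_simps)
  also have "\<dots> = (of_nat N - of_nat j) * (y + 1) * ((y gchoose j) * (x gchoose Suc p))"
    unfolding y x by (simp add: p algebra_simps)
  also have "\<dots> = (of_nat N - of_nat j) * (of_nat N + of_nat j + \<alpha> + \<beta> + 1) * c j"
    by (simp add: c_def x_def y_def p Suc_diff_le algebra_simps)
  finally show ?thesis .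
qed

lemma jacobi_op_jacobi: "jacobi_op \<alpha> \<beta> N (jacobi N \<alpha> \<beta>) = 0"
proof -
  define w :: "complex poly" where "w = [:-1/2, 1/2:]"
  define c where "c j = ((of_nat N + \<alpha> + \<beta> + of_nat j) gchoose j) * ((of_nat N + \<alpha>) gchoose (N - j))" for j
  define e where "e j = of_nat j * (of_nat j + \<alpha> + \<beta> + 1) - of_nat N * (of_nat N + \<alpha> + \<beta> + 1)" for j
  define f where "f j = of_nat j * (of_nat j + \<alpha>)" for j
  have "jacobi_op \<alpha> \<beta> N (jacobi N \<alpha> \<beta>)
      = (\<Sum>j=0..N. smult (c j * e j) (w ^ j)) + (\<Sum>j=0..N. smult (c j * f j) (w ^ (j - 1)))"
    unfolding jacobi_def jacobi_op_sum jacobi_op_smult jacobi_op_power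
    by (simp add: sum.distrib smult_add_right c_def e_def f_def w_def)
  also have "\<dots> = 0"
  proof (cases N)
    case 0
    then show ?thesis
      by (simp add: e_def f_def)
  next
    case (Suc M)
    have "c (Suc j) * f (Suc j) = - (c j * e j)" if "j \<le> M" for j
      using jacobi_coeff_recurrence[of j N \<alpha> \<beta>] that Suc
      by (simp add: c_def e_def f_def algebra_simps)
    then have "(\<Sum>j=0..M. smult (c (Suc j) * f (Suc j)) (w ^ j)) = - (\<Sum>j=0..M. smult (c j * e j) (w ^ j))"
      by (simp add: sum_negf)
    moreover have "(\<Sum>j=0..N. smult (c j * e j) (w ^ j)) = (\<Sum>j=0..M. smult (c j * e j) (w ^ j))"
      by (simp add: Suc e_def)
    moreover have "(\<Sum>j=0..N. smult (c j * f j) (w ^ (j - 1)))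
        = (\<Sum>j=0..M. smult (c (Suc j) * f (Suc j)) (w ^ j))"
      unfolding Suc sum.atLeast0_atMost_Suc_shift by (simp add: f_def)
    ultimately show ?thesis
      by simp
  qed
  finally show ?thesis .
qed

lemma degree_jacobi_le: "degree (jacobi N \<alpha> \<beta>) \<le> N"
  unfolding jacobi_def
proof (intro degree_sum_le)
  fix j
  assume "j \<in> {0..N}"
  then show "degree (smult (((of_nat N + \<alpha> + \<beta> + of_nat j) gchoose j) * ((of_nat N + \<alpha>) gchoose (N - j)))
      ([:-1/2, 1/2:] ^ j)) \<le> N"
    by (simp add: degree_power_eq)
qed simp

lemma coeff_jacobi_top: "coeff (jacobi N \<alpha> \<beta>) N = ((2 * of_nat N + \<alpha> + \<beta>) gchoose N) / 2 ^ N"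
proof -
  have "coeff ([:-1/2, 1/2:] ^ j :: complex poly) N = (if j = N then 1 / 2 ^ N else 0)" if "j \<le> N" for j
  proof -
    have "degree ([:-1/2, 1/2:] ^ j :: complex poly) = j"
      by (simp add: degree_power_eq)
    then show ?thesis
      using that lead_coeff_power[of "[:-1/2, 1/2:] :: complex poly" N]
      by (auto simp: coeff_eq_0 power_one_over)
  qed
  then have "coeff (jacobi N \<alpha> \<beta>) N
      = (\<Sum>j=0..N. if j = N then ((of_nat N + \<alpha> + \<beta> + of_nat N) gchoose N) / 2 ^ N else 0)"
    unfolding jacobi_def coeff_sum coeff_smult by (intro sum.cong) auto
  then show ?thesis
    by (simp add: algebra_simps)
qed

lemma jacobi_degree_lead_coeff:
  assumes "of_nat M = 2 * of_nat N + \<alpha> + \<beta>" and "N \<le> M"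
  shows "degree (jacobi N \<alpha> \<beta>) = N" and "lead_coeff (jacobi N \<alpha> \<beta>) = of_nat (M choose N) / 2 ^ N"
proof -
  have top: "coeff (jacobi N \<alpha> \<beta>) N = of_nat (M choose N) / 2 ^ N"
    using coeff_jacobi_top[of N \<alpha> \<beta>] assms(1) by (simp add: binomial_gbinomial)
  moreover have "of_nat (M choose N) / 2 ^ N \<noteq> (0 :: complex)"
    using assms(2) by simp
  ultimately show "degree (jacobi N \<alpha> \<beta>) = N"
    using degree_jacobi_le le_degree by (metis antisym)
  with top show "lead_coeff (jacobi N \<alpha> \<beta>) = of_nat (M choose N) / 2 ^ N"
    by simp
qed

definition jacobi_invariant :: "'a::field \<Rightarrow> 'a \<Rightarrow> 'a poly \<Rightarrow> 'a poly \<Rightarrow> 'a poly" where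
  "jacobi_invariant a b p q = [:a - b, a + b:] * p * q + [:-1, 0, 1:] * wronskian p q"

lemma pderiv_jacobi_invariant:
  fixes a b :: "'a::field_char_0"
  assumes p: "jacobi_op a b N\<^sub>1 p = 0" and q: "jacobi_op (-a) (-b) N\<^sub>2 q = 0"
    and N: "of_nat N\<^sub>2 = of_nat N\<^sub>1 + a + b"
  shows "pderiv (jacobi_invariant a b p q) = 0"
proof -
  have dX: "pderiv (monom 1 1 :: 'a poly) = 1" and dX2: "pderiv (monom 1 1 ^ 2 :: 'a poly) = 2 * monom 1 1"
    by (simp_all add: monom_Suc power2_eq_square pderiv_pCons one_pCons numeral_poly)
  have N': "of_nat N\<^sub>2 = of_nat N\<^sub>1 + [:a:] + [:b:]"
    using arg_cong[OF N, of "\<lambda>x. [:x:]"] by (simp only: const_poly_hom)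
  show ?thesis
    using p q N' unfolding jacobi_invariant_def jacobi_op_def wronskian_def
    unfolding pCons_triple_conv_monom unfolding pCons_pair_conv_monom smult_conv_const_mult
    unfolding const_poly_hom pderiv_add pderiv_diff pderiv_mult pderiv_minus dX2 dX pderiv_1 pderiv_0
      pderiv_singleton
    by algebra
qed

lemma wronskian_jacobi_products:
  fixes a b :: "'a::field_char_0" and p q :: "'a poly"
  defines "u \<equiv> [:1/2, 1/2:]" and "v \<equiv> [:-1/2, 1/2:]"
  assumes A: "of_nat (Suc A) = of_nat (Suc n) * b" and B: "of_nat (Suc B) = - (of_nat (Suc n) * a)"
  shows "wronskian (u ^ Suc A * p ^ Suc n) (v ^ Suc B * q ^ Suc n) =
    smult (of_nat (Suc n) / 4) (u ^ A * v ^ B * p ^ n * q ^ n * jacobi_invariant a b p q)"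
proof -
  define h :: "'a poly" where "h = [:1/2:]"
  have u: "u = h * (monom 1 1 + 1)" and v: "v = h * (monom 1 1 - 1)" and h: "2 * h = 1"
    and du: "pderiv u = h" and dv: "pderiv v = h"
    by (simp_all add: u_def v_def h_def monom_Suc one_pCons numeral_poly pderiv_pCons)
  have A': "of_nat (Suc A) = of_nat (Suc n) * [:b:]" and B': "of_nat (Suc B) = - (of_nat (Suc n) * [:a:])"
    using arg_cong[OF A, of "\<lambda>x. [:x:]"] arg_cong[OF B, of "\<lambda>x. [:x:]"] by (simp_all only: const_poly_hom)
  have c: "[:of_nat (Suc n) / 4:] = of_nat (Suc n) * h * h"
    by (simp add: h_def of_nat_poly)
  have "of_nat (Suc A) * pderiv u * v * p * q - of_nat (Suc B) * u * pderiv v * p * q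
        + of_nat (Suc n) * u * v * wronskian p q
      = smult (of_nat (Suc n) / 4) (jacobi_invariant a b p q)"
    using u v h A' B' unfolding du dv jacobi_invariant_def smult_conv_const_mult c
    unfolding pCons_triple_conv_monom unfolding pCons_pair_conv_monom unfolding const_poly_hom
    by algebra
  then show ?thesis
    unfolding wronskian_power_mult by (simp add: mult_ac)
qed

lemma degree_wronskian_jacobi_products_le:
  fixes a b :: complex
  assumes A: "of_nat (Suc A) = of_nat (Suc n) * b" and B: "of_nat (Suc B) = - (of_nat (Suc n) * a)"
    and N: "of_nat N\<^sub>2 = of_nat N\<^sub>1 + a + b"
  shows "degree (wronskian ([:1/2, 1/2:] ^ Suc A * jacobi N\<^sub>1 a b ^ Suc n)
      ([:-1/2, 1/2:] ^ Suc B * jacobi N\<^sub>2 (-a) (-b) ^ Suc n)) \<le> A + B + n * (N\<^sub>1 + N\<^sub>2)"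
proof -
  define J\<^sub>1 J\<^sub>2 where "J\<^sub>1 = jacobi N\<^sub>1 a b" and "J\<^sub>2 = jacobi N\<^sub>2 (-a) (-b)"
  define u v :: "complex poly" where "u = [:1/2, 1/2:]" and "v = [:-1/2, 1/2:]"
  define G where "G = u ^ A * v ^ B * J\<^sub>1 ^ n * J\<^sub>2 ^ n"
  have "pderiv (jacobi_invariant a b J\<^sub>1 J\<^sub>2) = 0"
    unfolding J\<^sub>1_def J\<^sub>2_def by (rule pderiv_jacobi_invariant[OF jacobi_op_jacobi jacobi_op_jacobi N])
  then have I: "degree (jacobi_invariant a b J\<^sub>1 J\<^sub>2) = 0"
    by (simp add: pderiv_eq_0_iff)
  have "degree (wronskian (u ^ Suc A * J\<^sub>1 ^ Suc n) (v ^ Suc B * J\<^sub>2 ^ Suc n))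
      \<le> degree (G * jacobi_invariant a b J\<^sub>1 J\<^sub>2)"
    unfolding u_def v_def G_def wronskian_jacobi_products[OF A B] by (rule degree_smult_le)
  also have "\<dots> \<le> degree G"
    using degree_mult_le[of G "jacobi_invariant a b J\<^sub>1 J\<^sub>2"] unfolding I by (simp only: add_0_right)
  also have "\<dots> \<le> A + B + n * N\<^sub>1 + n * N\<^sub>2"
  proof -
    have "degree (u ^ A) \<le> A" "degree (v ^ B) \<le> B"
      using degree_power_le[of u A] degree_power_le[of v B] by (simp_all add: u_def v_def)
    moreover have "degree (J\<^sub>1 ^ n) \<le> n * N\<^sub>1" "degree (J\<^sub>2 ^ n) \<le> n * N\<^sub>2"
      using degree_power_le[of J\<^sub>1 n] degree_power_le[of J\<^sub>2 n]
        degree_jacobi_le[of N\<^sub>1 a b] degree_jacobi_le[of N\<^sub>2 "-a" "-b"]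
      by (simp_all add: J\<^sub>1_def J\<^sub>2_def mult.commute order_trans)
    ultimately show ?thesis
      unfolding G_def by (intro order_trans[OF degree_mult_le] add_mono) simp_all
  qed
  finally show ?thesis
    by (simp add: u_def v_def J\<^sub>1_def J\<^sub>2_def algebra_simps)
qed

lemma degree_diff_jacobi_products:
  fixes a b :: complex and A B n N\<^sub>1 N\<^sub>2 :: nat
  defines "P \<equiv> [:1/2, 1/2:] ^ Suc A * jacobi N\<^sub>1 a b ^ Suc n"
      and "Q \<equiv> [:-1/2, 1/2:] ^ Suc B * jacobi N\<^sub>2 (-a) (-b) ^ Suc n"
  assumes A: "of_nat (Suc A) = of_nat (Suc n) * b" and B: "of_nat (Suc B) = - (of_nat (Suc n) * a)"
    and N: "of_nat N\<^sub>2 = of_nat N\<^sub>1 + a + b" and "P \<noteq> Q"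
  shows "degree (P - Q) + N\<^sub>1 \<le> B + n * N\<^sub>2"
proof -
  define J\<^sub>1 J\<^sub>2 where "J\<^sub>1 = jacobi N\<^sub>1 a b" and "J\<^sub>2 = jacobi N\<^sub>2 (-a) (-b)"
  define M where "M = N\<^sub>1 + N\<^sub>2"
  have J\<^sub>1: "degree J\<^sub>1 = N\<^sub>1" "lead_coeff J\<^sub>1 = of_nat (M choose N\<^sub>1) / 2 ^ N\<^sub>1"
    using jacobi_degree_lead_coeff[of M N\<^sub>1 a b] N by (simp_all add: J\<^sub>1_def M_def)
  have J\<^sub>2: "degree J\<^sub>2 = N\<^sub>2" "lead_coeff J\<^sub>2 = of_nat (M choose N\<^sub>1) / 2 ^ N\<^sub>2"
    using jacobi_degree_lead_coeff[of M N\<^sub>2 "-a" "-b"] N binomial_symmetric[of N\<^sub>1 M]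
    by (simp_all add: J\<^sub>2_def M_def)
  define D where "D = Suc A + Suc n * N\<^sub>1"
  have "(of_nat D :: complex) = of_nat (Suc n) * (b + of_nat N\<^sub>1)"
    unfolding D_def of_nat_add of_nat_mult A by (simp add: algebra_simps)
  also have "\<dots> = of_nat (Suc B + Suc n * N\<^sub>2)"
    unfolding of_nat_add of_nat_mult B N by (simp add: algebra_simps)
  finally have D: "Suc B + Suc n * N\<^sub>2 = D"
    by (metis of_nat_eq_iff)
  have "J\<^sub>1 \<noteq> 0" "J\<^sub>2 \<noteq> 0"
    using J\<^sub>1(2) J\<^sub>2(2) by (auto simp: M_def)
  then have "degree P = D" and "degree Q = D"
    using J\<^sub>1(1) J\<^sub>2(1) D
    by (simp_all add: P_def Q_def D_def degree_mult_eq degree_power_eq del: power_Suc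
        flip: J\<^sub>1_def J\<^sub>2_def)
  moreover have "lead_coeff P = of_nat (M choose N\<^sub>1) ^ Suc n / 2 ^ D"
    unfolding P_def J\<^sub>1_def[symmetric] lead_coeff_mult lead_coeff_power J\<^sub>1(2) D_def
    by (simp add: power_divide power_one_over mult.commute del: power_Suc flip: power_mult power_add)
  moreover have "lead_coeff Q = of_nat (M choose N\<^sub>1) ^ Suc n / 2 ^ D"
    unfolding Q_def J\<^sub>2_def[symmetric] lead_coeff_mult lead_coeff_power J\<^sub>2(2) D[symmetric]
    by (simp add: power_divide power_one_over mult.commute del: power_Suc flip: power_mult power_add)
  ultimately show ?thesis
    using degree_diff_le_wronskian[of P Q] degree_wronskian_jacobi_products_le[OF A B N, folded P_def Q_def]
      \<open>P \<noteq> Q\<close>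
    by (simp add: D_def algebra_simps)
qed

theorem mainTheorem5:
  fixes s t k l r :: nat
  assumes "s > 0" and "t > 0"
  defines "a \<equiv> - (of_nat (l * (s + t) + s) / of_nat (s + t) :: complex)"
      and "b \<equiv> (of_nat (k * (s + t) + s) / of_nat (s + t) :: complex)"
  defines "P \<equiv> [:1/2, 1/2:] ^ (k * (s + t) + s) * (jacobi (l + r) a b) ^ (s + t)"
      and "Q \<equiv> [:-1/2, 1/2:] ^ (l * (s + t) + s) * (jacobi (k + r) (-a) (-b)) ^ (s + t)"
  shows "int (degree (P - Q)) \<le>
           int (k + l + r) * (int s + int t - 1) + int s - int r - 1"
proof -
  obtain n A B where n: "s + t = Suc n" and A: "k * (s + t) + s = Suc A" and B: "l * (s + t) + s = Suc B"
    using assms(1) by (metis add_gr_0 gr0_conv_Suc)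
  define c :: complex where "c = of_nat (s + t)"
  have "c \<noteq> 0"
    using assms(2) by (simp add: c_def del: of_nat_add)
  have a: "a = - ((of_nat l * c + of_nat s) / c)" and b: "b = (of_nat k * c + of_nat s) / c"
    by (simp_all add: a_def b_def c_def)
  have "of_nat (Suc A) = of_nat (Suc n) * b" and "of_nat (Suc B) = - (of_nat (Suc n) * a)"
    using \<open>c \<noteq> 0\<close> unfolding a b A[symmetric] B[symmetric] n[symmetric] by (simp_all add: c_def)
  moreover have "of_nat (k + r) = of_nat (l + r) + a + b"
    using \<open>c \<noteq> 0\<close> unfolding a b by (simp add: field_simps)
  ultimately have "P \<noteq> Q \<Longrightarrow> degree (P - Q) + (l + r) \<le> B + n * (k + r)"
    using degree_diff_jacobi_products unfolding P_def Q_def A B unfolding n by blast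
  then have "P \<noteq> Q \<Longrightarrow> Suc (degree (P - Q) + r) \<le> s + (k + l + r) * n"
    using B unfolding n by (simp add: algebra_simps)
  then have "P \<noteq> Q \<Longrightarrow> int (degree (P - Q)) \<le> int (k + l + r) * int n + int s - int r - 1"
    using of_nat_mono[where 'a=int] by fastforce
  moreover have "int s + int t - 1 = int n"
    using n by simp
  moreover have "int r \<le> int (k + l + r) * int n"
    using mult_mono[of "int r" "int (k + l + r)" 1 "int n"] n assms by simp
  ultimately show ?thesis
    using assms(1) by (cases "P = Q") simp_all
qed

end
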